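(* Let $A, B, C \in \mathbb{Z}$ with $A > 0$ such that $Ax^2 + Bx + C$ is irreducible, let $\beta$ be a real root of it and $\beta'$ its other root. Then the following are equivalent: (i) $p_\beta(\alpha) < \infty$ for every $\alpha \in \mathbb{R}$; (ii) either $2A + B \leq 0$, or ($2A + B > 0$ and $A + B + C < 0$); (iii) at least one of $\beta$ and $\beta'$ is greater than $1$.
   Context: For $\beta, \alpha \in \mathbb{C}$, $p_\beta(\alpha) \in \mathbb{Z}_{\geq 0}\cup\{\infty\}$ is the number of polynomials $f \in \mathbb{Z}_{\geq 0}[x]$ (non-negative integer coefficients) with $f(\beta) = \alpha$. *)

theory Defs
  imports "HOL-Computational_Algebra.Computational_Algebra"
begin

text \<open>The set of polynomials with non-negative integer coefficients (modelled as nat poly)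
  whose value at beta equals alpha. p_beta(alpha) is its cardinality (possibly infinite).\<close>
definition reps :: "real \<Rightarrow> real \<Rightarrow> nat poly set" where
  "reps \<beta> \<alpha> = {f :: nat poly. poly (map_poly real f) \<beta> = \<alpha>}"

end

theory Submission
  imports Defs
begin

text \<open>
  If \<open>\<beta> > 1\<close>, a representation \<open>f(\<beta>) = \<alpha>\<close> has degree and coefficients bounded in terms of
  \<open>\<alpha>\<close>, so there are only finitely many. Since \<open>\<beta>\<close> is an irrational quadratic, reducing modulo
  the quadratic shows that \<open>f(\<beta>) = g(\<beta>)\<close> implies \<open>f(\<beta>') = g(\<beta>')\<close>; hence finiteness also
  holds when only the conjugate \<open>\<beta>'\<close> exceeds 1.

  If both roots are below 1, it suffices to find \<open>S, M, R\<close> with nonnegative integer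
  coefficients, \<open>M(1), R(1) \<ge> 1\<close> and \<open>S(\<beta>) = R(\<beta>) + M(\<beta>) S(\<beta>)\<close>: iterating
  \<open>S \<mapsto> R + M S\<close> keeps the value at \<open>\<beta>\<close> and strictly increases the value at 1. For \<open>B \<ge> 0\<close>
  the quadratic yields \<open>F\<close> with \<open>F(\<beta>) = c \<in> \<nat>\<close> and \<open>F(1) > c\<close>; as \<open>F(1)^n\<close> outgrows
  \<open>(n deg F + 1) c^n\<close>, some coefficient of \<open>F^n\<close> is at least \<open>c^n\<close>, and splitting off that
  monomial \<open>c^n x^k\<close> gives the triple with \<open>M = x^k\<close>. For \<open>B < 0\<close> both roots lie in
  \<open>(-1, 1)\<close>, so \<open>A^d (\<beta>^t + \<beta>^(t+1)) = U \<beta> + V\<close> with \<open>U, V < A^d\<close> for large \<open>t\<close>, which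
  gives the triple with \<open>S = A^d (1 + x)\<close> and \<open>M = x^t\<close>. Condition (ii) is the Vieta form of
  "not both roots are below 1".
\<close>

lemma map_poly_of_nat_add [simp]:
  "map_poly (of_nat :: nat \<Rightarrow> 'a::semiring_1) (p + q) = map_poly of_nat p + map_poly of_nat q"
  by (rule poly_eqI) (simp add: coeff_map_poly)

lemma map_poly_of_nat_mult [simp]:
  "map_poly (of_nat :: nat \<Rightarrow> 'a::comm_semiring_1) (p * q) = map_poly of_nat p * map_poly of_nat q"
  by (rule poly_eqI) (simp add: coeff_map_poly coeff_mult)

lemma map_poly_of_nat_power [simp]:
  "map_poly (of_nat :: nat \<Rightarrow> 'a::comm_semiring_1) (p ^ n) = map_poly of_nat p ^ n"
  by (induction n) simp_all

lemma mem_reps_iff [simp]: "f \<in> reps \<beta> \<alpha> \<longleftrightarrow> poly (map_poly real f) \<beta> = \<alpha>"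
  by (simp add: reps_def)

section \<open>Finiteness for \<open>\<beta> > 1\<close>\<close>

lemma nat_poly_term_le_poly:
  fixes f :: "nat poly" and x :: real
  assumes "x \<ge> 0"
  shows "real (coeff f i) * x ^ i \<le> poly (map_poly real f) x"
proof (cases "i \<le> degree f")
  case True
  then show ?thesis
    using assms by (auto simp: poly_altdef coeff_map_poly degree_map_poly intro!: member_le_sum)
next
  case False
  then show ?thesis
    using assms by (auto simp: poly_altdef coeff_map_poly degree_map_poly coeff_eq_0 intro!: sum_nonneg)
qed

lemma finite_degree_le_coeffs_in:
  assumes "finite X"
  shows "finite {p :: 'a::zero poly. degree p \<le> n \<and> (\<forall>i. coeff p i \<in> X)}"
proof -
  have "{p. degree p \<le> n \<and> (\<forall>i. coeff p i \<in> X)} \<subseteq> Poly ` {xs. set xs \<subseteq> X \<and> length xs = Suc n}"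
  proof
    fix p :: "'a poly"
    assume p: "p \<in> {p. degree p \<le> n \<and> (\<forall>i. coeff p i \<in> X)}"
    have "p = Poly (map (coeff p) [0..<Suc n])"
      using p by (intro poly_eqI) (auto simp: nth_default_def coeff_eq_0 simp del: upt_Suc)
    then show "p \<in> Poly ` {xs. set xs \<subseteq> X \<and> length xs = Suc n}"
      using p by force
  qed
  then show ?thesis
    by (rule finite_subset) (intro finite_imageI finite_lists_length_eq assms)
qed

lemma finite_reps_if_gt_1:
  assumes "\<beta> > 1"
  shows "finite (reps \<beta> \<alpha>)"
proof -
  obtain N where N: "\<alpha> < \<beta> ^ N"
    using real_arch_pow[OF assms] by blast
  have "reps \<beta> \<alpha> \<subseteq> {f. degree f \<le> N \<and> (\<forall>i. coeff f i \<in> {..nat \<lfloor>\<alpha>\<rfloor>})}"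
  proof (intro subsetI CollectI conjI allI)
    fix f
    assume "f \<in> reps \<beta> \<alpha>"
    then have term_le: "real (coeff f j) * \<beta> ^ j \<le> \<alpha>" for j
      using nat_poly_term_le_poly[of \<beta> f j] assms by simp
    show "coeff f i \<in> {..nat \<lfloor>\<alpha>\<rfloor>}" for i
    proof -
      have "real (coeff f i) \<le> real (coeff f i) * \<beta> ^ i"
        using assms by (simp add: mult_le_cancel_left1)
      then show ?thesis
        using term_le[of i] by (simp add: le_nat_floor)
    qed
    show "degree f \<le> N"
    proof (rule ccontr)
      assume "\<not> degree f \<le> N"
      then have "f \<noteq> 0"
        by auto
      then have "lead_coeff f \<ge> 1"
        using leading_coeff_neq_0[of f] by linarith
      then have "\<beta> ^ degree f \<le> real (lead_coeff f) * \<beta> ^ degree f"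
        using assms by simp
      also have "\<dots> < \<beta> ^ N"
        using term_le[of "degree f"] N by linarith
      finally show False
        using \<open>\<not> degree f \<le> N\<close> assms power_less_imp_less_exp by fastforce
    qed
  qed
  then show ?thesis
    by (rule finite_subset) (intro finite_degree_le_coeffs_in finite_atMost)
qed

section \<open>Conjugate roots\<close>

lemma poly_of_int_poly_of_rat:
  fixes q :: "int poly" and r :: rat
  shows "poly (map_poly real_of_int q) (of_rat r) = of_rat (poly (map_poly of_int q) r)"
  by (induction q) (simp_all add: map_poly_pCons of_rat_add of_rat_mult)

lemma irreducible_root_irrational:
  fixes q :: "int poly" and x :: real
  assumes irr: "irreducible (map_poly rat_of_int q)" and deg: "degree q \<ge> 2"
    and root: "poly (map_poly of_int q) x = 0"
  shows "x \<notin> \<rat>"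
proof
  assume "x \<in> \<rat>"
  then obtain r where x: "x = of_rat r"
    by (cases rule: Rats_cases)
  let ?p = "map_poly rat_of_int q"
  have "poly ?p r = 0"
    using root by (simp add: x poly_of_int_poly_of_rat)
  then obtain s where p: "?p = [:-r, 1:] * s"
    by (metis dvdE poly_eq_0_iff_dvd)
  have "\<not> is_unit [:-r, 1:]"
    by (simp add: is_unit_iff_degree)
  then have "is_unit s"
    using irreducibleD[OF irr p] by blast
  then have "s \<noteq> 0" and "degree s = 0"
    using is_unit_iff_degree[of s] not_is_unit_0 by metis+
  then have "degree ?p = 1"
    unfolding p by (subst degree_mult_eq) auto
  moreover have "degree ?p = degree q"
    by (simp add: degree_map_poly)
  ultimately show False
    using deg by simp
qed

lemma irrational_linear_int_eq_0_iff:
  fixes x :: real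
  assumes "x \<notin> \<rat>"
  shows "of_int a * x + of_int b = 0 \<longleftrightarrow> a = 0 \<and> b = 0"
proof
  assume eq: "of_int a * x + of_int b = 0"
  have "a = 0"
  proof (rule ccontr)
    assume "a \<noteq> 0"
    then have "x = - of_int b / of_int a"
      using eq by (simp add: field_simps)
    then show False
      using assms by simp
  qed
  then show "a = 0 \<and> b = 0"
    using eq by simp
qed simp

lemma nat_poly_at_quadratic_root_linear:
  fixes A B C :: int and f :: "nat poly"
  shows "\<exists>d U V. \<forall>\<rho>::real. of_int A * \<rho>^2 + of_int B * \<rho> + of_int C = 0 \<longrightarrow>
           of_int A ^ d * poly (map_poly real f) \<rho> = of_int U * \<rho> + of_int V"
proof (induction f)
  case 0
  show ?case
    by (intro exI[of _ 0]) simp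
next
  case (pCons a f)
  then obtain d U V where IH: "\<And>\<rho>::real. of_int A * \<rho>^2 + of_int B * \<rho> + of_int C = 0 \<Longrightarrow>
      of_int A ^ d * poly (map_poly real f) \<rho> = of_int U * \<rho> + of_int V"
    by blast
  have "of_int A ^ Suc d * poly (map_poly real (pCons a f)) \<rho>
      = of_int (A * V - B * U) * \<rho> + of_int (A ^ Suc d * int a - C * U)"
    if root: "of_int A * \<rho>^2 + of_int B * \<rho> + of_int C = 0" for \<rho> :: real
  proof -
    have "of_int A ^ Suc d * poly (map_poly real (pCons a f)) \<rho>
        = of_int A ^ Suc d * real a + of_int A * \<rho> * (of_int U * \<rho> + of_int V)"
      using IH[OF root] by (simp add: map_poly_pCons algebra_simps)
    also have "\<dots> = of_int A ^ Suc d * real a + of_int U * (of_int A * \<rho>^2) + of_int A * of_int V * \<rho>"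
      by (simp add: algebra_simps power2_eq_square)
    also have "of_int A * \<rho>^2 = - of_int B * \<rho> - of_int C"
      using root by simp
    finally show ?thesis
      by (simp add: algebra_simps)
  qed
  then show ?case
    by blast
qed

lemma nat_poly_eq_at_conjugate_root:
  fixes A B C :: int and \<beta> \<beta>' :: real and f g :: "nat poly"
  assumes "A \<noteq> 0" and irrational: "\<beta> \<notin> \<rat>"
    and root: "of_int A * \<beta>^2 + of_int B * \<beta> + of_int C = 0"
    and root': "of_int A * \<beta>'^2 + of_int B * \<beta>' + of_int C = 0"
    and eq: "poly (map_poly real f) \<beta> = poly (map_poly real g) \<beta>"
  shows "poly (map_poly real f) \<beta>' = poly (map_poly real g) \<beta>'"
proof -
  obtain d1 U1 V1 where f: "\<And>\<rho>::real. of_int A * \<rho>^2 + of_int B * \<rho> + of_int C = 0 \<Longrightarrow>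
      of_int A ^ d1 * poly (map_poly real f) \<rho> = of_int U1 * \<rho> + of_int V1"
    using nat_poly_at_quadratic_root_linear[of A B C f] by blast
  obtain d2 U2 V2 where g: "\<And>\<rho>::real. of_int A * \<rho>^2 + of_int B * \<rho> + of_int C = 0 \<Longrightarrow>
      of_int A ^ d2 * poly (map_poly real g) \<rho> = of_int U2 * \<rho> + of_int V2"
    using nat_poly_at_quadratic_root_linear[of A B C g] by blast
  define U where "U = A ^ d2 * U1 - A ^ d1 * U2"
  define V where "V = A ^ d2 * V1 - A ^ d1 * V2"
  have diff: "of_int A ^ (d1 + d2) * (poly (map_poly real f) \<rho> - poly (map_poly real g) \<rho>)
      = of_int U * \<rho> + of_int V"
    if "of_int A * \<rho>^2 + of_int B * \<rho> + of_int C = 0" for \<rho> :: real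
  proof -
    have "of_int A ^ (d1 + d2) * (poly (map_poly real f) \<rho> - poly (map_poly real g) \<rho>)
        = of_int A ^ d2 * (of_int A ^ d1 * poly (map_poly real f) \<rho>)
          - of_int A ^ d1 * (of_int A ^ d2 * poly (map_poly real g) \<rho>)"
      by (simp add: power_add algebra_simps)
    also have "\<dots> = of_int A ^ d2 * (of_int U1 * \<rho> + of_int V1) - of_int A ^ d1 * (of_int U2 * \<rho> + of_int V2)"
      using f[OF that] g[OF that] by simp
    finally show ?thesis
      by (simp add: U_def V_def algebra_simps)
  qed
  have "U = 0 \<and> V = 0"
    using diff[OF root] eq by (simp add: irrational_linear_int_eq_0_iff[OF irrational, symmetric])
  then show ?thesis
    using diff[OF root'] \<open>A \<noteq> 0\<close> by simp
qed

lemma finite_reps_if_conjugate_gt_1: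
  fixes A B C :: int and \<beta> \<beta>' :: real
  assumes "A \<noteq> 0" "\<beta> \<notin> \<rat>"
    and "of_int A * \<beta>^2 + of_int B * \<beta> + of_int C = 0"
    and "of_int A * \<beta>'^2 + of_int B * \<beta>' + of_int C = 0"
    and "\<beta>' > 1"
  shows "finite (reps \<beta> \<alpha>)"
proof (cases "reps \<beta> \<alpha> = {}")
  case False
  then obtain g where "g \<in> reps \<beta> \<alpha>"
    by blast
  then have g: "poly (map_poly real g) \<beta> = \<alpha>"
    by simp
  have "reps \<beta> \<alpha> \<subseteq> reps \<beta>' (poly (map_poly real g) \<beta>')"
  proof
    fix f
    assume "f \<in> reps \<beta> \<alpha>"
    with g have "poly (map_poly real f) \<beta> = poly (map_poly real g) \<beta>"
      by simp
    then have "poly (map_poly real f) \<beta>' = poly (map_poly real g) \<beta>'"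
      by (rule nat_poly_eq_at_conjugate_root[OF assms(1-4)])
    then show "f \<in> reps \<beta>' (poly (map_poly real g) \<beta>')"
      by simp
  qed
  then show ?thesis
    using finite_reps_if_gt_1[OF \<open>\<beta>' > 1\<close>] finite_subset by blast
qed simp

section \<open>Infinitely many representations\<close>

lemma infinite_reps_iterate:
  fixes S M R :: "nat poly" and \<beta> \<alpha> :: real
  assumes "S \<in> reps \<beta> \<alpha>"
    and fixed: "poly (map_poly real R) \<beta> + poly (map_poly real M) \<beta> * \<alpha> = \<alpha>"
    and "poly M 1 \<ge> 1" and "poly R 1 \<ge> 1"
  shows "infinite (reps \<beta> \<alpha>)"
proof -
  define f where "f n = ((\<lambda>p. R + M * p) ^^ n) S" for n
  have f_0: "f 0 = S" and f_Suc: "f (Suc n) = R + M * f n" for n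
    by (simp_all add: f_def)
  have "f n \<in> reps \<beta> \<alpha>" for n
  proof (induction n)
    case (Suc n)
    then show ?case
      using fixed by (simp add: f_Suc)
  qed (use assms(1) f_0 in simp)
  then have "range f \<subseteq> reps \<beta> \<alpha>"
    by blast
  have mono: "strict_mono (\<lambda>n. poly (f n) 1)"
    unfolding strict_mono_Suc_iff
  proof
    fix n
    have "poly (f n) 1 \<le> poly M 1 * poly (f n) 1"
      using \<open>poly M 1 \<ge> 1\<close> by simp
    moreover have "poly (f (Suc n)) 1 = poly R 1 + poly M 1 * poly (f n) 1"
      by (simp add: f_Suc)
    ultimately show "poly (f n) 1 < poly (f (Suc n)) 1"
      using \<open>poly R 1 \<ge> 1\<close> by linarith
  qed
  have "inj f"
  proof (rule injI)
    fix m n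
    assume "f m = f n"
    then show "m = n"
      using strict_mono_eq[OF mono, of m n] by simp
  qed
  then have "infinite (range f)"
    by (rule range_inj_infinite)
  then show ?thesis
    using \<open>range f \<subseteq> reps \<beta> \<alpha>\<close> finite_subset by blast
qed

lemma exists_linear_times_power_less_power:
  "\<exists>n\<ge>1. (D * n + 1) * c ^ n < (c + 1 :: nat) ^ n"
proof -
  define x where "x = real c / (real c + 1)"
  have "0 \<le> x" "x < 1"
    by (auto simp: x_def field_simps)
  then have "(\<lambda>n. real D * (of_nat n * x ^ n) + x ^ n) \<longlonglongrightarrow> real D * 0 + 0"
    by (intro tendsto_add tendsto_mult tendsto_const powser_times_n_limit_0 LIMSEQ_power_zero) auto
  then have "eventually (\<lambda>n. real D * (of_nat n * x ^ n) + x ^ n < 1) sequentially"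
    by (rule order_tendstoD) simp
  then obtain N where N: "\<And>n. n \<ge> N \<Longrightarrow> real D * (of_nat n * x ^ n) + x ^ n < 1"
    unfolding eventually_sequentially by blast
  define n where "n = Suc N"
  have "(real D * real n + 1) * x ^ n < 1"
    using N[of n] by (simp add: n_def algebra_simps)
  moreover have "x ^ n = real c ^ n / (real c + 1) ^ n"
    by (simp add: x_def power_divide)
  moreover have "(real c + 1) ^ n > 0"
    by simp
  ultimately have "(real D * real n + 1) * real c ^ n < (real c + 1) ^ n"
    by (simp add: pos_divide_less_eq)
  then have "real ((D * n + 1) * c ^ n) < real ((c + 1) ^ n)"
    by (simp only: of_nat_mult of_nat_add of_nat_1 of_nat_power)
  then have "(D * n + 1) * c ^ n < (c + 1) ^ n"
    by (simp only: of_nat_less_iff)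
  then show ?thesis
    by (intro exI[of _ n]) (simp add: n_def)
qed

lemma exists_coeff_ge_average:
  fixes p :: "nat poly"
  shows "\<exists>k. poly p 1 \<le> (degree p + 1) * coeff p k"
proof -
  define m where "m = Max (coeff p ` {..degree p})"
  have "m \<in> coeff p ` {..degree p}"
    unfolding m_def by (intro Max_in) auto
  then obtain k where k: "coeff p k = m"
    by blast
  have "poly p 1 = (\<Sum>i\<le>degree p. coeff p i)"
    by (simp add: poly_altdef)
  also have "\<dots> \<le> (\<Sum>i\<le>degree p. m)"
    by (rule sum_mono) (simp add: m_def)
  also have "\<dots> = (degree p + 1) * m"
    by simp
  finally have "poly p 1 \<le> (degree p + 1) * coeff p k"
    using k by simp
  then show ?thesis ..
qed

lemma infinite_reps_if_nat_value:
  fixes F :: "nat poly" and \<beta> :: real and c :: nat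
  assumes F_value: "poly (map_poly real F) \<beta> = c" and less: "c < poly F 1"
  shows "\<exists>\<alpha>. infinite (reps \<beta> \<alpha>)"
proof -
  obtain n where "n \<ge> 1" and n: "(degree F * n + 1) * c ^ n < (c + 1) ^ n"
    using exists_linear_times_power_less_power by blast
  define G where "G = F ^ n"
  have "c ^ n < (c + 1) ^ n"
    using \<open>n \<ge> 1\<close> by (simp add: power_strict_mono)
  also have G1: "(c + 1) ^ n \<le> poly G 1"
    unfolding G_def poly_power using less by (simp add: power_mono)
  finally have "c ^ n < poly G 1" .
  have "(degree G + 1) * c ^ n \<le> (degree F * n + 1) * c ^ n"
    unfolding G_def using degree_power_le[of F n] by simp
  also note n
  also note G1
  also obtain k where "poly G 1 \<le> (degree G + 1) * coeff G k"
    using exists_coeff_ge_average by blast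
  finally have "(degree G + 1) * c ^ n < (degree G + 1) * coeff G k" .
  then have "c ^ n < coeff G k"
    by (rule mult_left_less_imp_less) simp
  define R where "R = G - monom (c ^ n) k"
  have G: "G = R + monom (c ^ n) k"
    by (rule poly_eqI) (use \<open>c ^ n < coeff G k\<close> in \<open>auto simp: R_def coeff_monom\<close>)
  have "poly (map_poly real G) \<beta> = real c ^ n"
    by (simp add: G_def F_value)
  then have "poly (map_poly real R) \<beta> + poly (map_poly real (monom 1 k)) \<beta> * real (c ^ n) = real (c ^ n)"
    by (simp add: G map_poly_monom poly_monom algebra_simps)
  moreover have "poly R 1 \<ge> 1"
    using \<open>c ^ n < poly G 1\<close> by (simp add: G poly_monom)
  moreover have "[:c ^ n:] \<in> reps \<beta> (real (c ^ n))"
    by (simp add: map_poly_pCons)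
  ultimately have "infinite (reps \<beta> (real (c ^ n)))"
    by (intro infinite_reps_iterate[of "[:c ^ n:]" _ _ R "monom 1 k"]) (simp_all add: poly_monom)
  then show ?thesis
    by blast
qed

lemma infinite_reps_if_abs_roots_less_1:
  fixes A B C :: int and \<beta> \<beta>' :: real
  assumes "A > 0"
    and root: "of_int A * \<beta>^2 + of_int B * \<beta> + of_int C = 0"
    and root': "of_int A * \<beta>'^2 + of_int B * \<beta>' + of_int C = 0"
    and "\<beta> \<noteq> \<beta>'" and "\<bar>\<beta>\<bar> < 1" and "\<bar>\<beta>'\<bar> < 1"
  shows "\<exists>\<alpha>. infinite (reps \<beta> \<alpha>)"
proof -
  define e where "e t \<rho> = \<rho> ^ t + \<rho> ^ Suc t" for t and \<rho> :: real
  have e_lim: "(\<lambda>t. e t \<rho>) \<longlonglongrightarrow> 0" if "\<bar>\<rho>\<bar> < 1" for \<rho> :: real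
    unfolding e_def power_Suc
    by (intro tendsto_add_zero tendsto_mult_right_zero LIMSEQ_power_zero) (use that in auto)
  \<comment> \<open>\<open>e t \<rho> = g t * \<rho> + h t\<close> at both roots, so the reduction below has \<open>U = A^d g t\<close>, \<open>V = A^d h t\<close>\<close>
  define g where "g t = (e t \<beta> - e t \<beta>') / (\<beta> - \<beta>')" for t
  define h where "h t = e t \<beta> - g t * \<beta>" for t
  have "g \<longlonglongrightarrow> (0 - 0) / (\<beta> - \<beta>')"
    unfolding g_def by (intro tendsto_intros e_lim assms) (use assms in simp)
  then have g_lim: "g \<longlonglongrightarrow> 0"
    by simp
  have "h \<longlonglongrightarrow> 0 - 0 * \<beta>"
    unfolding h_def by (intro tendsto_diff tendsto_mult e_lim tendsto_const g_lim assms)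
  with g_lim have "eventually (\<lambda>t. g t < 1 \<and> h t < 1) sequentially"
    by (auto intro!: eventually_conj order_tendstoD)
  then obtain t where "g t < 1" and "h t < 1"
    by (auto simp: eventually_sequentially)
  obtain d U V where lin: "\<And>\<rho>::real. of_int A * \<rho>^2 + of_int B * \<rho> + of_int C = 0 \<Longrightarrow>
      of_int A ^ d * poly (map_poly real (monom 1 t + monom 1 (Suc t))) \<rho> = of_int U * \<rho> + of_int V"
    using nat_poly_at_quadratic_root_linear by blast
  define a where "a = A ^ d"
  have "a > 0"
    using \<open>A > 0\<close> by (simp add: a_def)
  have e_lin: "of_int a * e t \<beta> = of_int U * \<beta> + of_int V" "of_int a * e t \<beta>' = of_int U * \<beta>' + of_int V"
    using lin[OF root] lin[OF root'] by (simp_all add: a_def e_def map_poly_monom poly_monom)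
  then have "of_int a * (e t \<beta> - e t \<beta>') = of_int U * (\<beta> - \<beta>')"
    by (simp add: algebra_simps)
  then have U: "of_int U = of_int a * g t"
    using \<open>\<beta> \<noteq> \<beta>'\<close> by (simp add: g_def field_simps)
  then have V: "of_int V = of_int a * h t"
    using e_lin(1) by (simp add: h_def algebra_simps)
  have "of_int U < (of_int a :: real)" and "of_int V < (of_int a :: real)"
    using U V \<open>g t < 1\<close> \<open>h t < 1\<close> \<open>a > 0\<close> by (simp_all add: mult_less_cancel_left1)
  then have "U < a" and "V < a"
    by simp_all
  define S R :: "nat poly"
    where "S = [:nat a, nat a:]" and "R = [:nat (a - V), nat (a - U):]"
  have "poly (map_poly real R) \<beta> + poly (map_poly real (monom 1 t)) \<beta> * poly (map_poly real S) \<beta>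
      = poly (map_poly real S) \<beta>"
    using e_lin(1) \<open>U < a\<close> \<open>V < a\<close> \<open>a > 0\<close>
    by (simp add: S_def R_def e_def map_poly_pCons map_poly_monom poly_monom algebra_simps)
  moreover have "poly R 1 \<ge> 1"
    using \<open>U < a\<close> \<open>V < a\<close> by (simp add: R_def)
  ultimately have "infinite (reps \<beta> (poly (map_poly real S) \<beta>))"
    by (intro infinite_reps_iterate[of S _ _ R "monom 1 t"]) (simp_all add: poly_monom)
  then show ?thesis
    by blast
qed

lemma both_roots_less_iff:
  fixes a b c t x y :: real
  assumes "a > 0" and "x \<noteq> y"
    and "a * x^2 + b * x + c = 0" and "a * y^2 + b * y + c = 0"
  shows "x < t \<and> y < t \<longleftrightarrow> a * t^2 + b * t + c > 0 \<and> 2 * a * t + b > 0"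
proof -
  have "(x - y) * (a * (x + y) + b) = 0"
    using assms(3,4) by (simp add: algebra_simps power2_eq_square)
  then have b: "b = - a * (x + y)"
    using \<open>x \<noteq> y\<close> by simp
  have c: "c = a * x * y"
    using assms(3) unfolding b by (simp add: algebra_simps power2_eq_square)
  have "a * t^2 + b * t + c = a * ((t - x) * (t - y))" and "2 * a * t + b = a * ((t - x) + (t - y))"
    unfolding b c by (simp_all add: algebra_simps power2_eq_square)
  moreover have "x < t \<and> y < t \<longleftrightarrow> (t - x) * (t - y) > 0 \<and> (t - x) + (t - y) > 0"
    by (smt (verit) mult_pos_pos zero_less_mult_iff)
  ultimately show ?thesis
    using \<open>a > 0\<close> by (metis mult_pos_pos zero_less_mult_pos)
qed

lemma infinite_reps_if_roots_less_1:
  fixes A B C :: int and \<beta> \<beta>' :: real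
  assumes "A > 0"
    and root: "of_int A * \<beta>^2 + of_int B * \<beta> + of_int C = 0"
    and root': "of_int A * \<beta>'^2 + of_int B * \<beta>' + of_int C = 0"
    and "\<beta> \<noteq> \<beta>'" and "\<beta> < 1" and "\<beta>' < 1"
  shows "\<exists>\<alpha>. infinite (reps \<beta> \<alpha>)"
proof -
  have "real_of_int (A + B + C) > 0" and "real_of_int (2 * A + B) > 0"
    using both_roots_less_iff[of "of_int A" \<beta> \<beta>' "of_int B" "of_int C" 1] assms by simp_all
  then have "A + B + C > 0" and "2 * A + B > 0"
    by simp_all
  show ?thesis
  proof (cases "B \<ge> 0")
    case True
    define F :: "nat poly" where "F = [:nat C, nat B, nat A:]"
    have "real (nat C) = of_int C + real (nat (- C))"
      by (cases "C \<ge> 0") simp_all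
    then have "poly (map_poly real F) \<beta> = real (nat (- C))"
      using root True \<open>A > 0\<close> by (simp add: F_def map_poly_pCons algebra_simps power2_eq_square)
    moreover have "nat (- C) < poly F 1"
      using \<open>A + B + C > 0\<close> True \<open>A > 0\<close> by (simp add: F_def)
    ultimately show ?thesis
      by (rule infinite_reps_if_nat_value)
  next
    case False
    then have "real_of_int (A - B + C) > 0" and "real_of_int (2 * A - B) > 0"
      using \<open>A + B + C > 0\<close> \<open>2 * A + B > 0\<close> by simp_all
    moreover have "of_int A * (- \<beta>)^2 + (- of_int B) * (- \<beta>) + of_int C = 0"
      and "of_int A * (- \<beta>')^2 + (- of_int B) * (- \<beta>') + of_int C = 0"
      using root root' by simp_all
    ultimately have "- \<beta> < 1 \<and> - \<beta>' < 1"
      using both_roots_less_iff[of "of_int A" "- \<beta>" "- \<beta>'" "- of_int B" "of_int C" 1]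
        \<open>A > 0\<close> \<open>\<beta> \<noteq> \<beta>'\<close>
      by simp
    then have "\<bar>\<beta>\<bar> < 1" and "\<bar>\<beta>'\<bar> < 1"
      using \<open>\<beta> < 1\<close> \<open>\<beta>' < 1\<close> by auto
    then show ?thesis
      by (rule infinite_reps_if_abs_roots_less_1[OF \<open>A > 0\<close> root root' \<open>\<beta> \<noteq> \<beta>'\<close>])
  qed
qed

lemma poly_map_poly_of_int_quadratic:
  "poly (map_poly of_int [:C, B, A:]) (x :: 'a::comm_ring_1) = of_int A * x^2 + of_int B * x + of_int C"
  by (simp add: map_poly_pCons power2_eq_square algebra_simps)

lemma finite_reps_iff_root_gt_1:
  fixes A B C :: int and \<beta> \<beta>' :: real
  assumes "A > 0"
    and root: "of_int A * \<beta>^2 + of_int B * \<beta> + of_int C = 0"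
    and root': "of_int A * \<beta>'^2 + of_int B * \<beta>' + of_int C = 0"
    and "\<beta> \<noteq> \<beta>'" and "\<beta> \<notin> \<rat>" and "\<beta>' \<notin> \<rat>"
  shows "(\<forall>\<alpha>. finite (reps \<beta> \<alpha>)) \<longleftrightarrow> \<beta> > 1 \<or> \<beta>' > 1"
proof
  assume "\<forall>\<alpha>. finite (reps \<beta> \<alpha>)"
  moreover have "\<beta> \<noteq> 1" and "\<beta>' \<noteq> 1"
    using \<open>\<beta> \<notin> \<rat>\<close> \<open>\<beta>' \<notin> \<rat>\<close> by auto
  ultimately show "\<beta> > 1 \<or> \<beta>' > 1"
    using infinite_reps_if_roots_less_1[OF \<open>A > 0\<close> root root' \<open>\<beta> \<noteq> \<beta>'\<close>] by force
next
  assume "\<beta> > 1 \<or> \<beta>' > 1"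
  then show "\<forall>\<alpha>. finite (reps \<beta> \<alpha>)"
    using finite_reps_if_gt_1 finite_reps_if_conjugate_gt_1[OF _ \<open>\<beta> \<notin> \<rat>\<close> root root'] \<open>A > 0\<close>
    by auto
qed

theorem theorem7:
  fixes A B C :: int and \<beta> \<beta>' :: real
  assumes "A > 0"
    and "irreducible (map_poly rat_of_int [:C, B, A:])"
    and "poly (map_poly real_of_int [:C, B, A:]) \<beta> = 0"
    and "poly (map_poly real_of_int [:C, B, A:]) \<beta>' = 0"
    and "\<beta>' \<noteq> \<beta>"
  shows "((\<forall>\<alpha>::real. finite (reps \<beta> \<alpha>))
           \<longleftrightarrow> (2*A + B \<le> 0 \<or> (2*A + B > 0 \<and> A + B + C < 0)))
       \<and> ((2*A + B \<le> 0 \<or> (2*A + B > 0 \<and> A + B + C < 0))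
           \<longleftrightarrow> (\<beta> > 1 \<or> \<beta>' > 1))"
proof -
  have root: "of_int A * \<beta>^2 + of_int B * \<beta> + of_int C = 0"
    and root': "of_int A * \<beta>'^2 + of_int B * \<beta>' + of_int C = 0"
    using assms(3,4) by (simp_all add: poly_map_poly_of_int_quadratic)
  have roots_irrational: "x \<notin> \<rat>" if "poly (map_poly real_of_int [:C, B, A:]) x = 0" for x
    using irreducible_root_irrational[OF assms(2) _ that] \<open>A > 0\<close> by simp
  then have "\<beta> \<notin> \<rat>" and "\<beta>' \<notin> \<rat>" and "\<beta> \<noteq> 1" and "\<beta>' \<noteq> 1" and "A + B + C \<noteq> 0"
    using assms(3,4) roots_irrational[of 1] by (auto simp: poly_map_poly_of_int_quadratic)
  have "\<beta> < 1 \<and> \<beta>' < 1 \<longleftrightarrow> real_of_int (A + B + C) > 0 \<and> real_of_int (2 * A + B) > 0"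
    using both_roots_less_iff[of "of_int A" \<beta> \<beta>' "of_int B" "of_int C" 1] assms(1,5) root root'
    by simp
  then have "(2*A + B \<le> 0 \<or> (2*A + B > 0 \<and> A + B + C < 0)) \<longleftrightarrow> (\<beta> > 1 \<or> \<beta>' > 1)"
    using \<open>\<beta> \<noteq> 1\<close> \<open>\<beta>' \<noteq> 1\<close> \<open>A + B + C \<noteq> 0\<close> by auto
  moreover have "(\<forall>\<alpha>. finite (reps \<beta> \<alpha>)) \<longleftrightarrow> (\<beta> > 1 \<or> \<beta>' > 1)"
    using assms(1,5) root root' \<open>\<beta> \<notin> \<rat>\<close> \<open>\<beta>' \<notin> \<rat>\<close> by (intro finite_reps_iff_root_gt_1) auto
  ultimately show ?thesis
    by blast
qed

end
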